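(* Let $\Theta\subseteq\mathbb{R}$ and let $X$ be a random variable with probability density function or probability mass function $$f_X(x,\theta)=h(x)\exp\big(\eta(\theta)T(x)-A(\theta)\big),\qquad\theta\in\Theta,$$ where $T,h,\eta,A$ are known functions with $\eta,A$ differentiable on $\Theta$. Let $X_1,\dots,X_n$ be i.i.d. samples of $X$, let $\widehat{\boldsymbol\theta}=\frac1n\sum_{i=1}^nT(X_i)$, and for $z,\theta\in\Theta$ define $$\mathscr{M}(z,\theta)=\left[\frac{\exp(\eta(\theta)z-A(\theta))}{\exp(\eta(z)z-A(z))}\right]^n .$$ Suppose $\frac{d\eta(\theta)}{d\theta}>0$ for $\theta\in\Theta$. Then $$\Pr\{\widehat{\boldsymbol\theta}\ge z\mid\theta\}\le\mathscr{M}(z,\theta)\Pr\{\widehat{\boldsymbol\theta}\ge z\mid z\}\quad\text{for } z,\theta\in\Theta,\ z\ge\theta,$$ $$\Pr\{\widehat{\boldsymbol\theta}\le z\mid\theta\}\le\mathscr{M}(z,\theta)\Pr\{\widehat{\boldsymbol\theta}\le z\mid z\}\quad\text{for } z,\theta\in\Theta,\ z\le\theta.$$ Moreover, if additionally $\frac{dA(\theta)}{d\theta}=\theta\frac{d\eta(\theta)}{d\theta}$ on $\Theta$, then: (i) $\widehat{\boldsymbol\theta}$ is a maximum-likelihood and unbiased estimator of $\theta$; (ii) $\mathscr{M}(z,\theta)=\inf_{t\in\mathbb{R}}\mathbb{E}\big[\exp(nt(\widehat{\boldsymbol\theta}-z))\big]$ (expectation under parameter $\theta$), the infimum being attained at $t=\eta(z)-\eta(\theta)$;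 (iii) for fixed $z\in\Theta$, $\mathscr{M}(z,\theta)$ is increasing in $\theta\in\Theta$ with $\theta\le z$ and decreasing in $\theta\in\Theta$ with $\theta\ge z$; (iv) for fixed $\theta\in\Theta$, $\mathscr{M}(z,\theta)$ is increasing in $z\in\Theta$ with $z\le\theta$ and decreasing in $z\in\Theta$ with $z\ge\theta$; (v) for $z\in\Theta$, $$\Pr\{\widehat{\boldsymbol\theta}\ge z\mid z\}\le\frac12+\frac{C_{\mathrm{BE}}}{\sqrt n}\frac{\mathbb{E}[|T(X)-z|^3]}{\mathbb{E}^{3/2}[|T(X)-z|^2]}\le\frac12+\frac{C_{\mathrm{BE}}}{\sqrt n}\frac{\mathbb{E}^{3/4}[|T(X)-z|^4]}{\mathbb{E}^{3/2}[|T(X)-z|^2]},$$ $$\Pr\{\widehat{\boldsymbol\theta}\le z\mid z\}\le\frac12+\frac{C_{\mathrm{BE}}}{\sqrt n}\frac{\mathbb{E}[|T(X)-z|^3]}{\mathbb{E}^{3/2}[|T(X)-z|^2]}\le\frac12+\frac{C_{\mathrm{BE}}}{\sqrt n}\frac{\mathbb{E}^{3/4}[|T(X)-z|^4]}{\mathbb{E}^{3/2}[|T(X)-z|^2]},$$ where the expectations are taken with parameter $\theta=z$.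
   Context: $\Pr\{\cdot\mid\theta\}$ denotes probability when the samples have parameter $\theta$. $C_{\mathrm{BE}}$ denotes the absolute constant in the Berry–Esseen inequality: for i.i.d. samples $Y_1,Y_2,\dots$ of a random variable $Y$ with $\mathbb{E}[Y]=0$, $\mathbb{E}[Y^2]>0$, $\mathbb{E}[|Y|^3]<\infty$, if $F_n$ is the cdf of $\sum_{i=1}^nY_i/\sqrt{n\mathbb{E}[Y^2]}$ and $\Phi$ the standard normal cdf, then $|F_n(y)-\Phi(y)|\le\frac{C_{\mathrm{BE}}}{\sqrt n}\frac{\mathbb{E}[|Y|^3]}{\mathbb{E}^{3/2}[Y^2]}$ for all $y$ and $n$ (it is known that one may take $C_{\mathrm{BE}}<0.4785$). *)

theory Defs
  imports "HOL-Probability.Probability"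
begin

text \<open>Density (pdf or pmf, w.r.t. a base measure mu) of the one-parameter exponential family
  f(x,theta) = h(x) exp(eta(theta) T(x) - A(theta)).\<close>
definition expfam_density ::
  "('a \<Rightarrow> real) \<Rightarrow> ('a \<Rightarrow> real) \<Rightarrow> (real \<Rightarrow> real) \<Rightarrow> (real \<Rightarrow> real) \<Rightarrow> real \<Rightarrow> 'a \<Rightarrow> real" where
  "expfam_density h T \<eta> A \<theta> x = h x * exp (\<eta> \<theta> * T x - A \<theta>)"

definition expfam_law ::
  "'a measure \<Rightarrow> ('a \<Rightarrow> real) \<Rightarrow> ('a \<Rightarrow> real) \<Rightarrow> (real \<Rightarrow> real) \<Rightarrow> (real \<Rightarrow> real) \<Rightarrow> real \<Rightarrow> 'a measure" where
  "expfam_law \<mu> h T \<eta> A \<theta> = density \<mu> (\<lambda>x. ennreal (expfam_density h T \<eta> A \<theta> x))"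

definition sample_law ::
  "'a measure \<Rightarrow> ('a \<Rightarrow> real) \<Rightarrow> ('a \<Rightarrow> real) \<Rightarrow> (real \<Rightarrow> real) \<Rightarrow> (real \<Rightarrow> real) \<Rightarrow> nat \<Rightarrow> real \<Rightarrow> (nat \<Rightarrow> 'a) measure" where
  "sample_law \<mu> h T \<eta> A n \<theta> = PiM {..<n} (\<lambda>_. expfam_law \<mu> h T \<eta> A \<theta>)"

definition theta_hat :: "('a \<Rightarrow> real) \<Rightarrow> nat \<Rightarrow> (nat \<Rightarrow> 'a) \<Rightarrow> real" where
  "theta_hat T n x = (\<Sum>i<n. T (x i)) / real n"

definition likelihood ::
  "('a \<Rightarrow> real) \<Rightarrow> ('a \<Rightarrow> real) \<Rightarrow> (real \<Rightarrow> real) \<Rightarrow> (real \<Rightarrow> real) \<Rightarrow> nat \<Rightarrow> real \<Rightarrow> (nat \<Rightarrow> 'a) \<Rightarrow> real" where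
  "likelihood h T \<eta> A n \<theta> x = (\<Prod>i<n. expfam_density h T \<eta> A \<theta> (x i))"

definition M_fun :: "(real \<Rightarrow> real) \<Rightarrow> (real \<Rightarrow> real) \<Rightarrow> nat \<Rightarrow> real \<Rightarrow> real \<Rightarrow> real" where
  "M_fun \<eta> A n z \<theta> = (exp (\<eta> \<theta> * z - A \<theta>) / exp (\<eta> z * z - A z)) ^ n"

definition std_normal_cdf :: "real \<Rightarrow> real" where
  "std_normal_cdf y = measure (density lborel (\<lambda>t. ennreal (std_normal_density t))) {..y}"

definition berry_esseen_const :: "real \<Rightarrow> bool" where
  "berry_esseen_const C \<longleftrightarrow>
    (\<forall>Q :: real measure. prob_space Q \<and> sets Q = sets borel \<and>
       integrable Q (\<lambda>y. \<bar>y\<bar> ^ 3) \<and> (\<integral>y. y \<partial>Q) = 0 \<and> (\<integral>y. y\<^sup>2 \<partial>Q) > 0 \<longrightarrow>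
       (\<forall>n::nat. \<forall>y::real. n \<ge> 1 \<longrightarrow>
          \<bar>measure (PiM {..<n} (\<lambda>_. Q))
              {x \<in> space (PiM {..<n} (\<lambda>_. Q)).
                 (\<Sum>i<n. x i) / sqrt (real n * (\<integral>t. t\<^sup>2 \<partial>Q)) \<le> y}
           - std_normal_cdf y\<bar>
          \<le> C / sqrt (real n) * ((\<integral>t. \<bar>t\<bar> ^ 3 \<partial>Q) / (\<integral>t. t\<^sup>2 \<partial>Q) powr (3/2))))"

end

theory Submission
  imports Defs
begin

text \<open>
  Tilting: \<open>P \<theta>\<close> has density \<open>exp ((\<eta> \<theta> - \<eta> s) T - (A \<theta> - A s))\<close> with respect to \<open>P s\<close>,
  so the law of the sample under \<open>\<theta>\<close> has density \<open>M z \<theta> \<cdot> exp (n (\<eta> \<theta> - \<eta> z) (\<theta>\<^sub>n - z))\<close>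
  with respect to its law under \<open>z\<close>, where \<open>\<theta>\<^sub>n\<close> is the estimator. As \<open>\<eta>\<close> increases, the
  exponential factor is at most 1 on \<open>{\<theta>\<^sub>n \<ge> z}\<close> when \<open>\<theta> \<le> z\<close> (and on \<open>{\<theta>\<^sub>n \<le> z}\<close> when
  \<open>z \<le> \<theta>\<close>), which gives the two tail comparisons.

  If \<open>A' = \<theta> \<eta>'\<close>, differentiating \<open>E\<^sub>\<theta> exp ((\<eta> s - \<eta> \<theta>) T) = exp (A s - A \<theta>)\<close> at \<open>s = \<theta>\<close> gives
  \<open>E\<^sub>\<theta> T = \<theta>\<close>, so the estimator is unbiased. Integrating \<open>exp (n t (\<theta>\<^sub>n - z))\<close> against the
  tilted density leaves \<open>M z \<theta>\<close> times an exponential moment of a mean-zero variable, which is at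
  least 1 and equals 1 for \<open>t = \<eta> z - \<eta> \<theta>\<close>. The exponent \<open>(log M z \<theta>) / n\<close> has derivative
  \<open>\<eta>' \<theta> (z - \<theta>)\<close> in \<open>\<theta>\<close> and \<open>\<eta> \<theta> - \<eta> z\<close> in \<open>z\<close>, which yields the monotonicity
  statements and, at \<open>z = \<theta>\<^sub>n\<close>, maximality of the likelihood. Finally, Berry--Esseen is applied
  at the mean, where the normal distribution function is \<open>1/2\<close>, and Lyapunov's inequality
  \<open>E |Y|\<^sup>3 \<le> (E Y\<^sup>4) powr (3/4)\<close> compares the two Berry--Esseen bounds.
\<close>

lemma exp_mult_le_convex_comb:
  fixes l w :: real
  assumes "0 \<le> l" "l \<le> 1"
  shows "exp (l * w) \<le> l * exp w + (1 - l)"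
  using convex_onD[OF exp_convex, of "1 - l" w 0] assms by simp

lemma exp_difference_quotient_mono:
  fixes u v t :: real
  assumes "0 < u" "u \<le> v"
  shows "(exp (u * t) - 1) / u \<le> (exp (v * t) - 1) / v"
proof -
  have "exp ((u / v) * (v * t)) \<le> (u / v) * exp (v * t) + (1 - u / v)"
    using assms by (intro exp_mult_le_convex_comb) auto
  then have "v * exp (u * t) \<le> v * ((u / v) * exp (v * t) + (1 - u / v))"
    using assms by (intro mult_left_mono) auto
  also have "\<dots> = u * exp (v * t) + (v - u)"
    using assms by (simp add: field_simps)
  finally show ?thesis
    using assms by (simp add: field_simps)
qed

lemma exp_difference_quotient_tendsto:
  fixes u :: "nat \<Rightarrow> real"
  assumes "u \<longlonglongrightarrow> 0" "\<And>k. u k \<noteq> 0"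
  shows "(\<lambda>k. (exp (u k * t) - 1) / u k) \<longlonglongrightarrow> t"
proof -
  have "((\<lambda>y. exp (y * t)) has_field_derivative t) (at 0)"
    by (auto intro!: derivative_eq_intros)
  then have "((\<lambda>y. (exp (y * t) - 1) / y) \<longlongrightarrow> t) (at 0)"
    by (simp add: has_field_derivative_iff)
  moreover have "filterlim u (at 0) sequentially"
    using assms by (auto simp: filterlim_at intro!: always_eventually)
  ultimately show ?thesis
    by (rule filterlim_compose)
qed

lemma (in prob_space) expectation_eq_mgf_slope_limit:
  fixes X :: "'a \<Rightarrow> real" and u :: "nat \<Rightarrow> real"
  assumes X[measurable]: "X \<in> borel_measurable M"
    and u_pos: "\<And>k. u k > 0" and u_dec: "decseq u" and u_lim: "u \<longlonglongrightarrow> 0"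
    and mgf_int: "\<And>k. integrable M (\<lambda>x. exp (u k * X x))"
    and slope_lim: "(\<lambda>k. (expectation (\<lambda>x. exp (u k * X x)) - 1) / u k) \<longlonglongrightarrow> L"
  shows "integrable M X" and "expectation X = L"
proof -
  \<comment> \<open>The negated slopes increase to \<open>- X\<close> pointwise, so monotone convergence applies.\<close>
  define f where "f k x = - ((exp (u k * X x) - 1) / u k)" for k x
  have f_int: "integrable M (f k)" for k
    unfolding f_def using mgf_int by auto
  have f_mono: "mono (\<lambda>k. f k x)" for x
    unfolding f_def mono_def
    using u_pos u_dec by (auto simp: decseq_def intro!: exp_difference_quotient_mono)
  have f_lim: "(\<lambda>k. f k x) \<longlonglongrightarrow> - X x" for x
    unfolding f_def
    using exp_difference_quotient_tendsto[OF u_lim, of "X x"] u_pos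
    by (intro tendsto_minus) (metis less_irrefl)
  have f_integral_lim: "(\<lambda>k. integral\<^sup>L M (f k)) \<longlonglongrightarrow> - L"
    unfolding f_def using mgf_int slope_lim
    by (simp add: prob_space Bochner_Integration.integral_diff tendsto_minus)
  have "AE x in M. mono (\<lambda>k. f k x)" "AE x in M. (\<lambda>k. f k x) \<longlonglongrightarrow> - X x"
    using f_mono f_lim by auto
  note monotone_convergence = this f_integral_lim borel_measurable_uminus[OF X]
  show "integrable M X"
    using integrable_monotone_convergence[OF f_int monotone_convergence] by simp
  show "expectation X = L"
    using integral_monotone_convergence[OF f_int monotone_convergence] by simp
qed

lemma (in prob_space) nn_integral_exp_ge_one:
  fixes f :: "'a \<Rightarrow> real"
  assumes f: "integrable M f" and mean0: "expectation f = 0"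
  shows "1 \<le> (\<integral>\<^sup>+x. ennreal (exp (f x)) \<partial>M)"
proof (cases "(\<integral>\<^sup>+x. ennreal (exp (f x)) \<partial>M) = \<infinity>")
  case False
  have [measurable]: "f \<in> borel_measurable M"
    using f by simp
  have exp_int: "integrable M (\<lambda>x. exp (f x))"
    using False by (intro integrableI_nonneg) (auto simp: top.not_eq_extremum)
  have "1 = expectation (\<lambda>x. 1 + f x)"
    using f mean0 by (simp add: prob_space)
  also have "\<dots> \<le> expectation (\<lambda>x. exp (f x))"
    using f exp_int by (intro integral_mono) (auto simp: exp_ge_add_one_self)
  finally show ?thesis
    using exp_int by (simp add: nn_integral_eq_integral)
qed simp

lemma emeasure_density_le_cmult:
  assumes [measurable]: "f \<in> borel_measurable M" "E \<in> sets M"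
    and bound: "\<And>x. x \<in> E \<Longrightarrow> f x \<le> c"
  shows "emeasure (density M f) E \<le> c * emeasure M E"
proof -
  have "emeasure (density M f) E = (\<integral>\<^sup>+x. f x * indicator E x \<partial>M)"
    by (simp add: emeasure_density)
  also have "\<dots> \<le> (\<integral>\<^sup>+x. c * indicator E x \<partial>M)"
    using bound by (intro nn_integral_mono) (simp split: split_indicator)
  also have "\<dots> = c * emeasure M E"
    by (simp add: nn_integral_cmult_indicator)
  finally show ?thesis .
qed

lemma PiM_density:
  fixes f :: "'a \<Rightarrow> ennreal"
  assumes "sigma_finite_measure M" "sigma_finite_measure (density M f)"
    and f[measurable]: "f \<in> borel_measurable M" and I: "finite I"
  shows "PiM I (\<lambda>_. density M f) = density (PiM I (\<lambda>_. M)) (\<lambda>x. \<Prod>i\<in>I. f (x i))"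
proof -
  interpret D: product_sigma_finite "\<lambda>_. density M f"
    using assms(2) by (simp add: product_sigma_finite_def)
  interpret M: product_sigma_finite "\<lambda>_. M"
    using assms(1) by (simp add: product_sigma_finite_def)
  have "density (PiM I (\<lambda>_. M)) (\<lambda>x. \<Prod>i\<in>I. f (x i)) = PiM I (\<lambda>_. density M f)"
  proof (rule D.PiM_eqI[OF I])
    show "sets (density (PiM I (\<lambda>_. M)) (\<lambda>x. \<Prod>i\<in>I. f (x i))) = sets (PiM I (\<lambda>_. density M f))"
      by (simp cong: sets_PiM_cong)
  next
    fix A assume "\<And>i. i \<in> I \<Longrightarrow> A i \<in> sets (density M f)"
    then have A: "\<And>i. i \<in> I \<Longrightarrow> A i \<in> sets M"
      by simp
    have indicator_PiE: "indicator (Pi\<^sub>E I A) x = (\<Prod>i\<in>I. indicator (A i) (x i) :: ennreal)"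
      if "x \<in> space (PiM I (\<lambda>_. M))" for x
      using that I by (auto simp: indicator_def space_PiM PiE_def Pi_def extensional_def prod_zero_iff)
    have "emeasure (density (PiM I (\<lambda>_. M)) (\<lambda>x. \<Prod>i\<in>I. f (x i))) (Pi\<^sub>E I A)
        = (\<integral>\<^sup>+x. (\<Prod>i\<in>I. f (x i) * indicator (A i) (x i)) \<partial>PiM I (\<lambda>_. M))"
      using A I by (subst emeasure_density)
        (auto intro!: sets_PiM_I_finite nn_integral_cong simp: indicator_PiE prod.distrib)
    also have "\<dots> = (\<Prod>i\<in>I. \<integral>\<^sup>+y. f y * indicator (A i) y \<partial>M)"
      using A by (intro M.product_nn_integral_prod I) auto
    also have "\<dots> = (\<Prod>i\<in>I. emeasure (density M f) (A i))"
      using A by (simp add: emeasure_density)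
    finally show "emeasure (density (PiM I (\<lambda>_. M)) (\<lambda>x. \<Prod>i\<in>I. f (x i))) (Pi\<^sub>E I A)
        = (\<Prod>i\<in>I. emeasure (density M f) (A i))" .
  qed
  then show ?thesis by simp
qed

lemma measure_PiM_distr:
  fixes g :: "'a \<Rightarrow> real"
  assumes I: "finite I" and M: "prob_space M" and g[measurable]: "g \<in> borel_measurable M"
    and S: "S \<in> sets (PiM I (\<lambda>_. borel :: real measure))"
  shows "measure (PiM I (\<lambda>_. distr M borel g)) S
       = measure (PiM I (\<lambda>_. M)) {x \<in> space (PiM I (\<lambda>_. M)). (\<lambda>i\<in>I. g (x i)) \<in> S}"
proof -
  define Q where "Q = distr M borel g"
  have Q: "prob_space Q" and sets_Q: "sets Q = sets borel"
    unfolding Q_def using M by (simp_all add: prob_space.prob_space_distr)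
  have gQ: "g \<in> measurable M Q"
    using g by (simp add: measurable_cong_sets[OF refl sets_Q])
  have distr_Q: "distr M Q g = Q"
    unfolding Q_def by (rule distr_cong) simp_all
  have distr_PiM: "distr (PiM I (\<lambda>_. M)) (PiM I (\<lambda>_. Q)) (compose I g) = PiM I (\<lambda>_. Q)"
    using distr_PiM_finite_prob_space'[OF I, of "\<lambda>_. M" "\<lambda>_. Q" g] M Q gQ distr_Q by simp
  have compose: "compose I g \<in> measurable (PiM I (\<lambda>_. M)) (PiM I (\<lambda>_. Q))"
    unfolding compose_def
    by (intro measurable_restrict measurable_compose[OF measurable_component_singleton[of _ I "\<lambda>_. M"] gQ])
      simp
  have "S \<in> sets (PiM I (\<lambda>_. Q))"
    using S sets_Q by (simp cong: sets_PiM_cong)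
  then have "measure (PiM I (\<lambda>_. Q)) S
      = measure (PiM I (\<lambda>_. M)) (compose I g -` S \<inter> space (PiM I (\<lambda>_. M)))"
    using measure_distr[OF compose] by (simp add: distr_PiM)
  then show ?thesis
    unfolding Q_def compose_def by (simp add: Int_def conj_commute)
qed

lemma (in prob_space) integrable_abs_power_le:
  fixes X :: "'a \<Rightarrow> real"
  assumes [measurable]: "X \<in> borel_measurable M"
    and int: "integrable M (\<lambda>x. \<bar>X x\<bar> ^ m)" and "k \<le> m"
  shows "integrable M (\<lambda>x. \<bar>X x\<bar> ^ k)"
proof (rule Bochner_Integration.integrable_bound)
  show "integrable M (\<lambda>x. 1 + \<bar>X x\<bar> ^ m)"
    using int by simp
  have "\<bar>a\<bar> ^ k \<le> 1 + \<bar>a\<bar> ^ m" for a :: real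
  proof (cases "\<bar>a\<bar> \<le> 1")
    case True
    then show ?thesis
      using power_le_one[of "\<bar>a\<bar>" k] zero_le_power[of "\<bar>a\<bar>" m] by linarith
  next
    case False
    then show ?thesis
      using power_increasing[OF \<open>k \<le> m\<close>, of "\<bar>a\<bar>"] by linarith
  qed
  then show "AE x in M. norm (\<bar>X x\<bar> ^ k) \<le> norm (1 + \<bar>X x\<bar> ^ m)"
    by simp
qed measurable

lemma abs_cube_le_young:
  fixes y s :: real
  assumes s: "s > 0"
  shows "\<bar>y\<bar> ^ 3 \<le> 3 / 4 * (\<bar>y\<bar> ^ 4 / s) + s ^ 3 / 4"
proof -
  define a where "a = \<bar>y\<bar>"
  have "3 * a ^ 4 - 4 * s * a ^ 3 + s ^ 4 = (a - s)\<^sup>2 * (3 * a\<^sup>2 + 2 * a * s + s\<^sup>2)"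
    by (simp add: power2_eq_square power4_eq_xxxx power3_eq_cube algebra_simps)
  also have "\<dots> \<ge> 0"
    using s by (simp add: a_def)
  finally have "s * (4 * a ^ 3) \<le> s * (3 * (a ^ 4 / s) + s ^ 3)"
    using s by (simp add: algebra_simps power3_eq_cube power4_eq_xxxx)
  then show ?thesis
    using s unfolding a_def by (simp add: mult_le_cancel_left_pos)
qed

lemma (in prob_space) expectation_abs_cube_le:
  fixes X :: "'a \<Rightarrow> real"
  assumes [measurable]: "X \<in> borel_measurable M"
    and int4: "integrable M (\<lambda>x. \<bar>X x\<bar> ^ 4)"
  shows "expectation (\<lambda>x. \<bar>X x\<bar> ^ 3) \<le> expectation (\<lambda>x. \<bar>X x\<bar> ^ 4) powr (3/4)"
proof -
  let ?E4 = "expectation (\<lambda>x. \<bar>X x\<bar> ^ 4)"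
  have int3: "integrable M (\<lambda>x. \<bar>X x\<bar> ^ 3)"
    by (rule integrable_abs_power_le[OF _ int4]) simp_all
  show ?thesis
  proof (cases "?E4 = 0")
    case True
    then have "AE x in M. \<bar>X x\<bar> ^ 4 = 0"
      using integral_nonneg_eq_0_iff_AE[OF int4] by simp
    then have "AE x in M. \<bar>X x\<bar> ^ 3 = 0"
      by (auto elim: eventually_mono)
    then have "expectation (\<lambda>x. \<bar>X x\<bar> ^ 3) = 0"
      by (simp add: integral_eq_zero_AE)
    then show ?thesis by simp
  next
    case False
    define s where "s = ?E4 powr (1/4)"
    have "?E4 > 0"
      using False by (simp add: order_less_le)
    then have s: "s > 0" "s ^ 3 = ?E4 powr (3/4)" "s ^ 4 = ?E4"
      unfolding s_def by (simp_all add: powr_realpow[symmetric] powr_powr)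
    \<comment> \<open>Integrate the pointwise Young inequality, optimized at \<open>s = (E |X|^4)^(1/4)\<close>.\<close>
    have "expectation (\<lambda>x. \<bar>X x\<bar> ^ 3) \<le> expectation (\<lambda>x. 3 / 4 * (\<bar>X x\<bar> ^ 4 / s) + s ^ 3 / 4)"
      using int3 int4 abs_cube_le_young[OF s(1)] by (intro integral_mono) auto
    also have "\<dots> = 3 / 4 * (?E4 / s) + s ^ 3 / 4"
      using int4 by (simp add: prob_space)
    also have "?E4 / s = s ^ 3"
      using s(1) unfolding s(3)[symmetric] by (simp add: eval_nat_numeral)
    finally show ?thesis
      using s by simp
  qed
qed

lemma DERIV_at_if_DERIV_within_interval:
  fixes g :: "real \<Rightarrow> real"
  assumes S: "is_interval S" and "a \<in> S" "b \<in> S" "a < x" "x < b"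
    and deriv: "(g has_real_derivative D) (at x within S)"
  shows "(g has_real_derivative D) (at x)"
proof -
  have "{a<..<b} \<subseteq> S"
    using mem_is_interval_1_I[OF S \<open>a \<in> S\<close> \<open>b \<in> S\<close>] by auto
  then have "x \<in> interior S"
    using \<open>a < x\<close> \<open>x < b\<close> by (meson greaterThanLessThan_iff interiorI open_greaterThanLessThan)
  then show ?thesis
    using deriv by (simp only: at_within_interior)
qed

lemma DERIV_sign_change_imp_mono_on_antimono_on:
  fixes g g' :: "real \<Rightarrow> real"
  assumes S: "is_interval S"
    and deriv: "\<And>x. x \<in> S \<Longrightarrow> (g has_real_derivative g' x) (at x within S)"
    and nonneg: "\<And>x. x \<in> S \<Longrightarrow> x \<le> c \<Longrightarrow> 0 \<le> g' x"
    and nonpos: "\<And>x. x \<in> S \<Longrightarrow> c \<le> x \<Longrightarrow> g' x \<le> 0"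
  shows "mono_on {x \<in> S. x \<le> c} g \<and> antimono_on {x \<in> S. c \<le> x} g"
proof -
  have between: "x \<in> S" if "a \<in> S" "b \<in> S" "a \<le> x" "x \<le> b" for a b x
    using mem_is_interval_1_I[OF S] that by blast
  have cont: "continuous_on {a..b} g" if "a \<in> S" "b \<in> S" for a b
    by (rule continuous_on_subset[OF DERIV_continuous_on[OF deriv]]) (auto intro: between[OF that])
  have deriv_at: "x \<in> S \<and> DERIV g x :> g' x" if "a \<in> S" "b \<in> S" "a < x" "x < b" for a b x
  proof
    show "x \<in> S"
      using between[OF that(1,2)] that(3,4) by simp
    then show "DERIV g x :> g' x"
      using DERIV_at_if_DERIV_within_interval[OF S that deriv] by blast
  qed
  show ?thesis
    unfolding monotone_on_def
  proof (intro conjI ballI impI)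
    fix a b assume a: "a \<in> {x \<in> S. x \<le> c}" and b: "b \<in> {x \<in> S. x \<le> c}" and "a \<le> b"
    show "g a \<le> g b"
    proof (rule DERIV_nonneg_imp_increasing_open[OF \<open>a \<le> b\<close> _ cont])
      show "\<exists>y. DERIV g x :> y \<and> 0 \<le> y" if "a < x" "x < b" for x
        using deriv_at[of a b x] nonneg[of x] a b that by auto
    qed (use a b in auto)
  next
    fix a b assume a: "a \<in> {x \<in> S. c \<le> x}" and b: "b \<in> {x \<in> S. c \<le> x}" and "a \<le> b"
    show "g b \<le> g a"
    proof (rule DERIV_nonpos_imp_decreasing_open[OF \<open>a \<le> b\<close> _ cont])
      show "\<exists>y. DERIV g x :> y \<and> y \<le> 0" if "a < x" "x < b" for x
        using deriv_at[of a b x] nonpos[of x] a b that by auto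
    qed (use a b in auto)
  qed
qed

lemma DERIV_pos_imp_strict_mono_on:
  fixes g g' :: "real \<Rightarrow> real"
  assumes S: "is_interval S"
    and deriv: "\<And>x. x \<in> S \<Longrightarrow> (g has_real_derivative g' x) (at x within S)"
    and pos: "\<And>x. x \<in> S \<Longrightarrow> 0 < g' x"
  shows "strict_mono_on S g"
proof (rule strict_mono_onI)
  fix a b assume ab: "a \<in> S" "b \<in> S" "a < b"
  have between: "x \<in> S" if "a \<le> x" "x \<le> b" for x
    using mem_is_interval_1_I[OF S ab(1,2)] that by blast
  show "g a < g b"
  proof (rule DERIV_pos_imp_increasing_open[OF \<open>a < b\<close>])
    show "\<exists>y. DERIV g x :> y \<and> 0 < y" if "a < x" "x < b" for x
    proof -
      have "x \<in> S"
        using between that by simp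
      then show ?thesis
        using DERIV_at_if_DERIV_within_interval[OF S ab(1,2) that deriv] pos by blast
    qed
    show "continuous_on {a..b} g"
      by (rule continuous_on_subset[OF DERIV_continuous_on[OF deriv]]) (auto intro: between)
  qed
qed

lemma strict_mono_on_sgn_diff:
  fixes f :: "real \<Rightarrow> real"
  assumes "strict_mono_on S f" "a \<in> S" "b \<in> S"
  shows "sgn (f a - f b) = sgn (a - b)"
  using strict_mono_onD[OF assms(1) assms(2,3)] strict_mono_onD[OF assms(1) assms(3,2)]
  by (cases a b rule: linorder_cases) auto

lemma obtain_seq_approaching_from_side:
  fixes \<theta> s0 :: real
  assumes S: "is_interval S" and \<theta>: "\<theta> \<in> S" and s0: "s0 \<in> S" "s0 \<noteq> \<theta>"
  obtains s where "\<And>k. s k \<in> S" "\<And>k. sgn (s k - \<theta>) = sgn (s0 - \<theta>)"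
    "\<And>k. sgn (s (Suc k) - s k) = - sgn (s0 - \<theta>)" "filterlim s (at \<theta> within S) sequentially"
proof
  define s where "s k = \<theta> + (s0 - \<theta>) * inverse (real (Suc k))" for k
  show s_in: "s k \<in> S" for k
  proof -
    have "(1 - inverse (real (Suc k))) *\<^sub>R \<theta> + inverse (real (Suc k)) *\<^sub>R s0 \<in> S"
      using S \<theta> s0(1) unfolding is_interval_convex_1
      by (intro convexD) (auto simp: field_simps)
    then show ?thesis
      by (simp add: s_def algebra_simps)
  qed
  show s_sgn: "sgn (s k - \<theta>) = sgn (s0 - \<theta>)" for k
    by (simp add: s_def sgn_mult)
  show "sgn (s (Suc k) - s k) = - sgn (s0 - \<theta>)" for k
  proof -
    have "s (Suc k) - s k = (s0 - \<theta>) * (inverse (real (Suc (Suc k))) - inverse (real (Suc k)))"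
      by (simp add: s_def algebra_simps)
    moreover have "inverse (real (Suc (Suc k))) < inverse (real (Suc k))"
      by (simp add: field_simps)
    ultimately show ?thesis
      by (simp add: sgn_mult)
  qed
  have "s \<longlonglongrightarrow> \<theta> + (s0 - \<theta>) * 0"
    unfolding s_def by (intro tendsto_intros LIMSEQ_inverse_real_of_nat)
  moreover have "s k \<noteq> \<theta>" for k
    using s_sgn[of k] s0(2) by (auto simp: sgn_eq_0_iff)
  ultimately show "filterlim s (at \<theta> within S) sequentially"
    using s_in by (auto simp: filterlim_at intro!: always_eventually)
qed

lemma mono_on_antimono_on_exp_mult:
  fixes g :: "real \<Rightarrow> real"
  assumes "mono_on S g \<and> antimono_on S' g" "0 \<le> c"
  shows "mono_on S (\<lambda>x. exp (c * g x)) \<and> antimono_on S' (\<lambda>x. exp (c * g x))"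
  using assms by (auto simp: monotone_on_def intro: mult_left_mono)

lemma std_normal_cdf_0: "std_normal_cdf 0 = 1 / 2"
proof -
  define D where "D = density lborel (\<lambda>t. ennreal (std_normal_density t))"
  interpret D: prob_space D
    unfolding D_def by (rule prob_space_normal_density) simp
  have space_D: "space D = UNIV" and sets_D: "sets D = sets borel"
    unfolding D_def by auto
  have "emeasure D {0<..} = (\<integral>\<^sup>+x. ennreal (std_normal_density x) * indicator {0<..} x \<partial>lborel)"
    unfolding D_def by (simp add: emeasure_density)
  also have "\<dots> = (\<integral>\<^sup>+x. ennreal (std_normal_density x) * indicator {0<..} x \<partial>distr lborel borel uminus)"
    by (simp add: lborel_distr_uminus)
  also have "\<dots> = (\<integral>\<^sup>+x. ennreal (std_normal_density x) * indicator {..<0} x \<partial>lborel)"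
    by (subst nn_integral_distr) (auto intro!: nn_integral_cong simp: normal_density_def indicator_def)
  also have "\<dots> = emeasure D {..<0}"
    unfolding D_def by (simp add: emeasure_density)
  finally have symmetric: "measure D {0<..} = measure D {..<0}"
    by (simp add: measure_def)
  have "emeasure D {0} = 0"
    unfolding D_def by (simp add: emeasure_density nn_integral_0_iff_AE AE_lborel_singleton)
  then have "measure D {..0} = measure D {..<0}"
    using D.finite_measure_Union[of "{..<0}" "{0}"]
    by (simp add: sets_D measure_def ivl_disj_un_singleton(2)[symmetric])
  moreover have "{..0} \<union> {0<..} = (UNIV :: real set)" "{..0} \<inter> {0<..} = ({} :: real set)"
    by auto
  then have "measure D {..0} + measure D {0<..} = 1"
    using D.finite_measure_Union[of "{..0}" "{0<..}"] D.prob_space by (simp add: sets_D space_D)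
  ultimately show ?thesis
    using symmetric unfolding std_normal_cdf_def D_def[symmetric] by simp
qed

lemma berry_esseen_constD:
  assumes "berry_esseen_const C" and "prob_space Q" "sets Q = sets borel"
    and "integrable Q (\<lambda>y. \<bar>y\<bar> ^ 3)" "(\<integral>y. y \<partial>Q) = 0" "(\<integral>y. y\<^sup>2 \<partial>Q) > 0" "n \<ge> 1"
  shows "\<bar>measure (PiM {..<n} (\<lambda>_. Q))
            {x \<in> space (PiM {..<n} (\<lambda>_. Q)). (\<Sum>i<n. x i) / sqrt (real n * (\<integral>t. t\<^sup>2 \<partial>Q)) \<le> y}
          - std_normal_cdf y\<bar>
      \<le> C / sqrt (real n) * ((\<integral>t. \<bar>t\<bar> ^ 3 \<partial>Q) / (\<integral>t. t\<^sup>2 \<partial>Q) powr (3/2))"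
  using assms(1) assms(2-) unfolding berry_esseen_const_def by (elim allE[where x=Q] impE) auto

lemma berry_esseen_const_nonneg:
  assumes BE: "berry_esseen_const C"
  shows "0 \<le> C"
proof -
  \<comment> \<open>Test the defining inequality on the standard normal law itself, with \<open>n = 1\<close>.\<close>
  define Q where "Q = density lborel (\<lambda>t. ennreal (std_normal_density t))"
  have Q: "prob_space Q" "sets Q = sets borel"
    unfolding Q_def by (simp_all add: prob_space_normal_density)
  have moment: "integrable Q (\<lambda>t. \<bar>t\<bar> ^ k)" "(\<integral>t. t ^ k \<partial>Q) = (\<integral>t. std_normal_density t * t ^ k \<partial>lborel)"
    "(\<integral>t. \<bar>t\<bar> ^ k \<partial>Q) = (\<integral>t. std_normal_density t * \<bar>t\<bar> ^ k \<partial>lborel)" for k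
    unfolding Q_def
    by (simp_all add: integrable_density integral_density integrable_std_normal_moment_abs)
  have "(\<integral>t. t \<partial>Q) = 0"
    using moment(2)[of 1] integral_std_normal_moment_odd[of 0] by simp
  moreover have "(\<integral>t. t\<^sup>2 \<partial>Q) = 1"
    using moment(2)[of 2] integral_std_normal_moment_even[of 1] by simp
  moreover have "(\<integral>t. \<bar>t\<bar> ^ 3 \<partial>Q) = 2 * sqrt (2 / pi)"
    using moment(3)[of 3] integral_std_normal_moment_abs_odd[of 1] by simp
  ultimately have "0 \<le> C / sqrt (real 1) * (2 * sqrt (2 / pi) / 1 powr (3/2))"
    using berry_esseen_constD[OF BE Q moment(1)[of 3], of 1 0] by (auto intro: order_trans[OF abs_ge_zero])
  then show ?thesis
    using pi_gt_zero by (auto simp: zero_le_mult_iff)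
qed

lemma berry_esseen_sum_nonpos:
  fixes M :: "'a measure" and g :: "'a \<Rightarrow> real"
  assumes BE: "berry_esseen_const C" and M: "prob_space M" and g[measurable]: "g \<in> borel_measurable M"
    and int3: "integrable M (\<lambda>x. \<bar>g x\<bar> ^ 3)" and mean0: "(\<integral>x. g x \<partial>M) = 0"
    and var: "(\<integral>x. (g x)\<^sup>2 \<partial>M) > 0" and n: "n \<ge> 1"
  shows "measure (PiM {..<n} (\<lambda>_. M)) {x \<in> space (PiM {..<n} (\<lambda>_. M)). (\<Sum>i<n. g (x i)) \<le> 0}
      \<le> 1/2 + C / sqrt (real n) * ((\<integral>x. \<bar>g x\<bar> ^ 3 \<partial>M) / (\<integral>x. (g x)\<^sup>2 \<partial>M) powr (3/2))"
proof -
  define Q where "Q = distr M borel g"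
  have Q: "prob_space Q" "sets Q = sets borel"
    unfolding Q_def using M by (simp_all add: prob_space.prob_space_distr)
  have Q_integral: "(\<integral>t. f t \<partial>Q) = (\<integral>x. f (g x) \<partial>M)"
    if [measurable]: "f \<in> borel_measurable borel" for f :: "real \<Rightarrow> real"
    unfolding Q_def by (simp add: integral_distr)
  have Q_int3: "integrable Q (\<lambda>t. \<bar>t\<bar> ^ 3)"
    unfolding Q_def using int3 by (simp add: integrable_distr_eq)
  have Q_var: "(\<integral>t. t\<^sup>2 \<partial>Q) = (\<integral>x. (g x)\<^sup>2 \<partial>M)"
    by (simp add: Q_integral)
  have sqrt_pos: "sqrt (real n * (\<integral>x. (g x)\<^sup>2 \<partial>M)) > 0"
    using n var by simp
  define S where "S = {y \<in> space (PiM {..<n} (\<lambda>_. borel :: real measure)). (\<Sum>i<n. y i) \<le> 0}"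
  have "space (PiM {..<n} (\<lambda>_. Q)) = space (PiM {..<n} (\<lambda>_. borel))"
    using Q(2) by (intro sets_eq_imp_space_eq sets_PiM_cong) simp_all
  then have "{x \<in> space (PiM {..<n} (\<lambda>_. Q)).
      (\<Sum>i<n. x i) / sqrt (real n * (\<integral>t. t\<^sup>2 \<partial>Q)) \<le> 0} = S"
    unfolding S_def Q_var using sqrt_pos by (simp add: divide_le_0_iff)
  moreover have "(\<integral>t. t \<partial>Q) = 0" "(\<integral>t. t\<^sup>2 \<partial>Q) > 0"
    using mean0 var by (simp_all add: Q_integral Q_var)
  ultimately have "\<bar>measure (PiM {..<n} (\<lambda>_. Q)) S - std_normal_cdf 0\<bar>
      \<le> C / sqrt (real n) * ((\<integral>t. \<bar>t\<bar> ^ 3 \<partial>Q) / (\<integral>t. t\<^sup>2 \<partial>Q) powr (3/2))"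
    using berry_esseen_constD[OF BE Q Q_int3 _ _ n, of 0] by simp
  moreover have "measure (PiM {..<n} (\<lambda>_. Q)) S
      = measure (PiM {..<n} (\<lambda>_. M)) {x \<in> space (PiM {..<n} (\<lambda>_. M)). (\<Sum>i<n. g (x i)) \<le> 0}"
  proof -
    have "S \<in> sets (PiM {..<n} (\<lambda>_. borel))"
      unfolding S_def by measurable
    then have "measure (PiM {..<n} (\<lambda>_. Q)) S
        = measure (PiM {..<n} (\<lambda>_. M)) {x \<in> space (PiM {..<n} (\<lambda>_. M)). (\<lambda>i\<in>{..<n}. g (x i)) \<in> S}"
      unfolding Q_def by (rule measure_PiM_distr[OF finite_lessThan M g])
    moreover have "(\<Sum>i<n. (\<lambda>i\<in>{..<n}. g (x i)) i) = (\<Sum>i<n. g (x i))" for x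
      by (rule sum.cong) simp_all
    ultimately show ?thesis
      by (simp add: S_def space_PiM)
  qed
  ultimately show ?thesis
    using std_normal_cdf_0 by (simp add: Q_integral)
qed

locale expfam =
  fixes \<mu> :: "'a measure"
    and h T :: "'a \<Rightarrow> real"
    and \<eta> A \<eta>' A' :: "real \<Rightarrow> real"
    and \<Theta> :: "real set"
    and n :: nat
  assumes interval: "is_interval \<Theta>"
    and h_measurable[measurable]: "h \<in> borel_measurable \<mu>"
    and T_measurable[measurable]: "T \<in> borel_measurable \<mu>"
    and h_nonneg: "\<And>x. x \<in> space \<mu> \<Longrightarrow> h x \<ge> 0"
    and prob_space_law: "\<And>\<theta>. \<theta> \<in> \<Theta> \<Longrightarrow> prob_space (expfam_law \<mu> h T \<eta> A \<theta>)"
    and \<eta>_deriv: "\<And>\<theta>. \<theta> \<in> \<Theta> \<Longrightarrow> (\<eta> has_real_derivative \<eta>' \<theta>) (at \<theta> within \<Theta>)"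
    and A_deriv: "\<And>\<theta>. \<theta> \<in> \<Theta> \<Longrightarrow> (A has_real_derivative A' \<theta>) (at \<theta> within \<Theta>)"
    and \<eta>'_pos: "\<And>\<theta>. \<theta> \<in> \<Theta> \<Longrightarrow> \<eta>' \<theta> > 0"
    and n_pos: "n \<ge> 1"
begin

abbreviation P :: "real \<Rightarrow> 'a measure" where
  "P \<theta> \<equiv> expfam_law \<mu> h T \<eta> A \<theta>"

abbreviation Pn :: "real \<Rightarrow> (nat \<Rightarrow> 'a) measure" where
  "Pn \<theta> \<equiv> sample_law \<mu> h T \<eta> A n \<theta>"

lemma sets_P [simp, measurable_cong]: "sets (P \<theta>) = sets \<mu>"
  by (simp add: expfam_law_def)

lemma space_P [simp]: "space (P \<theta>) = space \<mu>"
  by (simp add: expfam_law_def)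

lemma Pn_eq_PiM: "Pn \<theta> = PiM {..<n} (\<lambda>_. P \<theta>)"
  by (simp add: sample_law_def)

lemma sets_Pn [measurable_cong]: "sets (Pn \<theta>) = sets (PiM {..<n} (\<lambda>_. \<mu>))"
  unfolding Pn_eq_PiM by (intro sets_PiM_cong) simp_all

lemma space_Pn: "space (Pn \<theta>) = space (PiM {..<n} (\<lambda>_. \<mu>))"
  using sets_Pn by (rule sets_eq_imp_space_eq)

lemma prob_space_Pn: "\<theta> \<in> \<Theta> \<Longrightarrow> prob_space (Pn \<theta>)"
  unfolding Pn_eq_PiM by (intro prob_space_PiM prob_space_law)

lemma theta_hat_measurable [measurable]: "theta_hat T n \<in> borel_measurable (PiM {..<n} (\<lambda>_. \<mu>))"
  unfolding theta_hat_def[abs_def] by measurable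

lemma sum_T_eq_theta_hat: "(\<Sum>i<n. T (x i)) = real n * theta_hat T n x"
  using n_pos by (simp add: theta_hat_def)

lemma \<eta>_strict_mono: "strict_mono_on \<Theta> \<eta>"
  using interval \<eta>_deriv \<eta>'_pos by (rule DERIV_pos_imp_strict_mono_on)

lemma \<eta>_mono: "a \<in> \<Theta> \<Longrightarrow> b \<in> \<Theta> \<Longrightarrow> a \<le> b \<Longrightarrow> \<eta> a \<le> \<eta> b"
  using \<eta>_strict_mono by (rule strict_mono_on_leD)

definition likelihood_ratio :: "real \<Rightarrow> real \<Rightarrow> 'a \<Rightarrow> real" where
  "likelihood_ratio \<theta> s x = exp ((\<eta> \<theta> - \<eta> s) * T x - (A \<theta> - A s))"

lemma likelihood_ratio_measurable [measurable]: "likelihood_ratio \<theta> s \<in> borel_measurable \<mu>"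
  unfolding likelihood_ratio_def[abs_def] by measurable

lemma likelihood_ratio_pos: "likelihood_ratio \<theta> s x > 0"
  by (simp add: likelihood_ratio_def)

lemma P_eq_density: "P \<theta> = density (P s) (\<lambda>x. ennreal (likelihood_ratio \<theta> s x))"
proof -
  have "ennreal (expfam_density h T \<eta> A s x) * ennreal (likelihood_ratio \<theta> s x)
      = ennreal (expfam_density h T \<eta> A \<theta> x)" if "x \<in> space \<mu>" for x
  proof -
    have "expfam_density h T \<eta> A s x * likelihood_ratio \<theta> s x = expfam_density h T \<eta> A \<theta> x"
      unfolding expfam_density_def likelihood_ratio_def
      by (simp add: mult.assoc exp_add[symmetric] algebra_simps)
    moreover have "expfam_density h T \<eta> A s x \<ge> 0"
      using h_nonneg[OF that] by (simp add: expfam_density_def)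
    ultimately show ?thesis
      using likelihood_ratio_pos by (metis ennreal_mult less_imp_le)
  qed
  then show ?thesis
    unfolding expfam_law_def
    by (subst density_density_eq) (auto intro!: density_cong simp: expfam_density_def)
qed

lemma nn_integral_exp_T:
  assumes "s \<in> \<Theta>"
  shows "(\<integral>\<^sup>+x. ennreal (exp ((\<eta> s - \<eta> \<theta>) * T x)) \<partial>P \<theta>) = ennreal (exp (A s - A \<theta>))"
proof -
  interpret prob_space "P s"
    using assms by (rule prob_space_law)
  have "(\<integral>\<^sup>+x. ennreal (exp ((\<eta> s - \<eta> \<theta>) * T x)) \<partial>P \<theta>)
      = (\<integral>\<^sup>+x. ennreal (likelihood_ratio \<theta> s x) * ennreal (exp ((\<eta> s - \<eta> \<theta>) * T x)) \<partial>P s)"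
    by (subst P_eq_density[of \<theta> s]) (rule nn_integral_density; measurable)
  also have "\<dots> = (\<integral>\<^sup>+x. ennreal (exp (A s - A \<theta>)) \<partial>P s)"
  proof (intro nn_integral_cong)
    fix x
    have "likelihood_ratio \<theta> s x * exp ((\<eta> s - \<eta> \<theta>) * T x) = exp (A s - A \<theta>)"
      unfolding likelihood_ratio_def by (simp add: exp_add[symmetric] algebra_simps)
    then show "ennreal (likelihood_ratio \<theta> s x) * ennreal (exp ((\<eta> s - \<eta> \<theta>) * T x)) = ennreal (exp (A s - A \<theta>))"
      using likelihood_ratio_pos by (metis ennreal_mult less_imp_le exp_ge_zero)
  qed
  also have "\<dots> = ennreal (exp (A s - A \<theta>))"
    using emeasure_space_1 by simp
  finally show ?thesis .
qed

lemma integrable_exp_T: "s \<in> \<Theta> \<Longrightarrow> integrable (P \<theta>) (\<lambda>x. exp ((\<eta> s - \<eta> \<theta>) * T x))"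
  using nn_integral_exp_T by (intro integrableI_nonneg) auto

lemma integral_exp_T: "s \<in> \<Theta> \<Longrightarrow> (\<integral>x. exp ((\<eta> s - \<eta> \<theta>) * T x) \<partial>P \<theta>) = exp (A s - A \<theta>)"
  using nn_integral_exp_T by (subst integral_eq_nn_integral) auto

definition M_exponent :: "real \<Rightarrow> real \<Rightarrow> real" where
  "M_exponent z \<theta> = (\<eta> \<theta> - \<eta> z) * z - (A \<theta> - A z)"

lemma M_fun_eq_exp: "M_fun \<eta> A n z \<theta> = exp (real n * M_exponent z \<theta>)"
  unfolding M_fun_def M_exponent_def
  by (simp add: exp_diff[symmetric] exp_of_nat_mult[symmetric] algebra_simps)

lemma prod_likelihood_ratio:
  "(\<Prod>i<n. likelihood_ratio \<theta> z (x i))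
    = M_fun \<eta> A n z \<theta> * exp (real n * (\<eta> \<theta> - \<eta> z) * (theta_hat T n x - z))"
proof -
  have "(\<Sum>i<n. (\<eta> \<theta> - \<eta> z) * T (x i) - (A \<theta> - A z))
      = real n * M_exponent z \<theta> + real n * (\<eta> \<theta> - \<eta> z) * (theta_hat T n x - z)"
    unfolding M_exponent_def sum_subtractf sum_distrib_left[symmetric] sum_T_eq_theta_hat
    by (simp add: algebra_simps)
  then show ?thesis
    unfolding likelihood_ratio_def M_fun_eq_exp by (simp add: exp_sum[symmetric] exp_add[symmetric])
qed

lemma Pn_eq_density:
  assumes "\<theta> \<in> \<Theta>" "z \<in> \<Theta>"
  shows "Pn \<theta> = density (Pn z)
    (\<lambda>x. ennreal (M_fun \<eta> A n z \<theta> * exp (real n * (\<eta> \<theta> - \<eta> z) * (theta_hat T n x - z))))"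
proof -
  have "Pn \<theta> = density (Pn z) (\<lambda>x. \<Prod>i\<in>{..<n}. ennreal (likelihood_ratio \<theta> z (x i)))"
    unfolding Pn_eq_PiM P_eq_density[of \<theta> z]
    using prob_space_law assms
    by (intro PiM_density) (simp_all add: prob_space_imp_sigma_finite P_eq_density[of \<theta> z, symmetric])
  also have "\<dots> = density (Pn z)
      (\<lambda>x. ennreal (M_fun \<eta> A n z \<theta> * exp (real n * (\<eta> \<theta> - \<eta> z) * (theta_hat T n x - z))))"
    using likelihood_ratio_pos
    by (intro density_cong) (simp_all add: prod_ennreal less_imp_le prod_likelihood_ratio[symmetric])
  finally show ?thesis .
qed

lemma measure_Pn_le_M_fun:
  assumes \<theta>: "\<theta> \<in> \<Theta>" and z: "z \<in> \<Theta>" and E: "E \<in> sets (Pn z)"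
    and sign: "\<And>x. x \<in> E \<Longrightarrow> (\<eta> \<theta> - \<eta> z) * (theta_hat T n x - z) \<le> 0"
  shows "measure (Pn \<theta>) E \<le> M_fun \<eta> A n z \<theta> * measure (Pn z) E"
proof -
  interpret P\<theta>: prob_space "Pn \<theta>"
    using \<theta> by (rule prob_space_Pn)
  interpret Pz: prob_space "Pn z"
    using z by (rule prob_space_Pn)
  have "emeasure (Pn \<theta>) E \<le> ennreal (M_fun \<eta> A n z \<theta>) * emeasure (Pn z) E"
    unfolding Pn_eq_density[OF \<theta> z]
  proof (rule emeasure_density_le_cmult)
    fix x assume "x \<in> E"
    then have "real n * (\<eta> \<theta> - \<eta> z) * (theta_hat T n x - z) \<le> 0"
      using sign by (simp add: mult.assoc mult_nonneg_nonpos)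
    then show "ennreal (M_fun \<eta> A n z \<theta> * exp (real n * (\<eta> \<theta> - \<eta> z) * (theta_hat T n x - z)))
        \<le> ennreal (M_fun \<eta> A n z \<theta>)"
      unfolding M_fun_eq_exp by (intro ennreal_leI mult_left_le) simp_all
  qed (use E in measurable)
  moreover have "E \<in> sets (Pn \<theta>)"
    using E by (simp add: sets_Pn)
  ultimately show ?thesis
    using E by (simp add: P\<theta>.emeasure_eq_measure Pz.emeasure_eq_measure ennreal_mult[symmetric] M_fun_eq_exp)
qed

lemma upper_tail_le:
  assumes "z \<in> \<Theta>" "\<theta> \<in> \<Theta>" "\<theta> \<le> z"
  shows "measure (Pn \<theta>) {x \<in> space (Pn \<theta>). theta_hat T n x \<ge> z}
       \<le> M_fun \<eta> A n z \<theta> * measure (Pn z) {x \<in> space (Pn z). theta_hat T n x \<ge> z}"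
  unfolding space_Pn using assms \<eta>_mono[of \<theta> z]
  by (intro measure_Pn_le_M_fun) (auto simp: space_Pn[symmetric] mult_nonpos_nonneg)

lemma lower_tail_le:
  assumes "z \<in> \<Theta>" "\<theta> \<in> \<Theta>" "z \<le> \<theta>"
  shows "measure (Pn \<theta>) {x \<in> space (Pn \<theta>). theta_hat T n x \<le> z}
       \<le> M_fun \<eta> A n z \<theta> * measure (Pn z) {x \<in> space (Pn z). theta_hat T n x \<le> z}"
  unfolding space_Pn using assms \<eta>_mono[of z \<theta>]
  by (intro measure_Pn_le_M_fun) (auto simp: space_Pn[symmetric] mult_nonneg_nonpos)

lemma nn_integral_exp_theta_hat:
  assumes "\<theta> \<in> \<Theta>" "z \<in> \<Theta>"
  shows "(\<integral>\<^sup>+x. ennreal (exp (real n * t * (theta_hat T n x - z))) \<partial>Pn \<theta>)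
    = ennreal (M_fun \<eta> A n z \<theta>)
      * (\<integral>\<^sup>+x. ennreal (exp (real n * (t + \<eta> \<theta> - \<eta> z) * (theta_hat T n x - z))) \<partial>Pn z)"
proof -
  have "ennreal (M_fun \<eta> A n z \<theta> * exp (real n * (\<eta> \<theta> - \<eta> z) * (theta_hat T n x - z)))
        * ennreal (exp (real n * t * (theta_hat T n x - z)))
      = ennreal (M_fun \<eta> A n z \<theta>)
        * ennreal (exp (real n * (t + \<eta> \<theta> - \<eta> z) * (theta_hat T n x - z)))" for x
    unfolding M_fun_eq_exp
    by (simp add: ennreal_mult[symmetric] mult.assoc exp_add[symmetric] algebra_simps)
  then show ?thesis
    unfolding Pn_eq_density[OF assms]
    by (subst nn_integral_density) (simp_all add: nn_integral_cmult)
qed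

lemma berry_esseen_bound_le_fourth_moment:
  assumes BE: "berry_esseen_const C" and z: "z \<in> \<Theta>"
    and int4: "integrable (P z) (\<lambda>x. \<bar>T x - z\<bar> ^ 4)"
  shows "1/2 + C / sqrt (real n) *
      ((\<integral>x. \<bar>T x - z\<bar> ^ 3 \<partial>P z) / (\<integral>x. \<bar>T x - z\<bar> ^ 2 \<partial>P z) powr (3/2))
    \<le> 1/2 + C / sqrt (real n) *
      ((\<integral>x. \<bar>T x - z\<bar> ^ 4 \<partial>P z) powr (3/4) / (\<integral>x. \<bar>T x - z\<bar> ^ 2 \<partial>P z) powr (3/2))"
proof -
  interpret prob_space "P z"
    using z by (rule prob_space_law)
  have "(\<integral>x. \<bar>T x - z\<bar> ^ 3 \<partial>P z) \<le> (\<integral>x. \<bar>T x - z\<bar> ^ 4 \<partial>P z) powr (3/4)"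
    using int4 by (intro expectation_abs_cube_le) simp_all
  then have "(\<integral>x. \<bar>T x - z\<bar> ^ 3 \<partial>P z) / (\<integral>x. \<bar>T x - z\<bar> ^ 2 \<partial>P z) powr (3/2)
      \<le> (\<integral>x. \<bar>T x - z\<bar> ^ 4 \<partial>P z) powr (3/4) / (\<integral>x. \<bar>T x - z\<bar> ^ 2 \<partial>P z) powr (3/2)"
    by (rule divide_right_mono) simp
  then show ?thesis
    using berry_esseen_const_nonneg[OF BE] by (intro add_left_mono mult_left_mono) simp_all
qed

end

locale expfam_mean_param = expfam +
  assumes A'_eq: "\<And>\<theta>. \<theta> \<in> \<Theta> \<Longrightarrow> A' \<theta> = \<theta> * \<eta>' \<theta>"
begin

lemma M_exponent_deriv_param:
  assumes "\<theta> \<in> \<Theta>"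
  shows "((\<lambda>\<theta>. M_exponent z \<theta>) has_real_derivative \<eta>' \<theta> * (z - \<theta>)) (at \<theta> within \<Theta>)"
proof -
  have "((\<lambda>\<theta>. M_exponent z \<theta>) has_real_derivative \<eta>' \<theta> * z - A' \<theta>) (at \<theta> within \<Theta>)"
    unfolding M_exponent_def using \<eta>_deriv[OF assms] A_deriv[OF assms]
    by (auto intro!: derivative_eq_intros)
  then show ?thesis
    using A'_eq[OF assms] by (simp add: algebra_simps)
qed

lemma M_exponent_deriv_point:
  assumes "z \<in> \<Theta>"
  shows "((\<lambda>z. M_exponent z \<theta>) has_real_derivative \<eta> \<theta> - \<eta> z) (at z within \<Theta>)"
proof -
  have "((\<lambda>z. M_exponent z \<theta>) has_real_derivative (- \<eta>' z) * z + (\<eta> \<theta> - \<eta> z) + A' z) (at z within \<Theta>)"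
    unfolding M_exponent_def using \<eta>_deriv[OF assms] A_deriv[OF assms]
    by (auto intro!: derivative_eq_intros)
  then show ?thesis
    using A'_eq[OF assms] by (simp add: algebra_simps)
qed

lemma M_exponent_mono_param:
  "mono_on {\<theta> \<in> \<Theta>. \<theta> \<le> z} (M_exponent z) \<and> antimono_on {\<theta> \<in> \<Theta>. z \<le> \<theta>} (M_exponent z)"
  using interval M_exponent_deriv_param
  by (rule DERIV_sign_change_imp_mono_on_antimono_on)
    (use \<eta>'_pos in \<open>auto intro!: mult_nonneg_nonneg mult_nonneg_nonpos simp: less_imp_le\<close>)

lemma M_exponent_mono_point:
  assumes "\<theta> \<in> \<Theta>"
  shows "mono_on {z \<in> \<Theta>. z \<le> \<theta>} (\<lambda>z. M_exponent z \<theta>) \<and> antimono_on {z \<in> \<Theta>. \<theta> \<le> z} (\<lambda>z. M_exponent z \<theta>)"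
  using interval M_exponent_deriv_point
  by (rule DERIV_sign_change_imp_mono_on_antimono_on) (auto simp: \<eta>_mono assms)

lemma M_exponent_nonpos:
  assumes "z \<in> \<Theta>" "\<theta> \<in> \<Theta>"
  shows "M_exponent z \<theta> \<le> 0"
proof -
  have "M_exponent z \<theta> \<le> M_exponent z z"
    using M_exponent_mono_param[of z] assms
    by (cases "\<theta> \<le> z") (auto simp: monotone_on_def)
  then show ?thesis
    by (simp add: M_exponent_def)
qed

lemma M_fun_mono_param:
  shows "mono_on {\<theta> \<in> \<Theta>. \<theta> \<le> z} (\<lambda>\<theta>. M_fun \<eta> A n z \<theta>)"
    and "antimono_on {\<theta> \<in> \<Theta>. \<theta> \<ge> z} (\<lambda>\<theta>. M_fun \<eta> A n z \<theta>)"
  using mono_on_antimono_on_exp_mult[OF M_exponent_mono_param, of "real n"]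
  unfolding M_fun_eq_exp by simp_all

lemma M_fun_mono_point:
  assumes "\<theta> \<in> \<Theta>"
  shows "mono_on {z \<in> \<Theta>. z \<le> \<theta>} (\<lambda>z. M_fun \<eta> A n z \<theta>)"
    and "antimono_on {z \<in> \<Theta>. z \<ge> \<theta>} (\<lambda>z. M_fun \<eta> A n z \<theta>)"
  using mono_on_antimono_on_exp_mult[OF M_exponent_mono_point[OF assms], of "real n"]
  unfolding M_fun_eq_exp by simp_all

lemma likelihood_eq:
  "likelihood h T \<eta> A n \<theta> x = (\<Prod>i<n. h (x i)) * exp (real n * (\<eta> \<theta> * theta_hat T n x - A \<theta>))"
proof -
  have "(\<Sum>i<n. \<eta> \<theta> * T (x i) - A \<theta>) = real n * (\<eta> \<theta> * theta_hat T n x - A \<theta>)"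
    unfolding sum_subtractf sum_distrib_left[symmetric] sum_T_eq_theta_hat
    by (simp add: algebra_simps)
  then show ?thesis
    unfolding likelihood_def expfam_density_def by (simp add: prod.distrib exp_sum[symmetric])
qed

lemma theta_hat_maximizes_likelihood:
  assumes x: "x \<in> space (PiM {..<n} (\<lambda>_. \<mu>))" and "theta_hat T n x \<in> \<Theta>" "\<theta> \<in> \<Theta>"
  shows "likelihood h T \<eta> A n \<theta> x \<le> likelihood h T \<eta> A n (theta_hat T n x) x"
proof -
  let ?z = "theta_hat T n x"
  have "\<eta> \<theta> * ?z - A \<theta> \<le> \<eta> ?z * ?z - A ?z"
    using M_exponent_nonpos[OF assms(2,3)] by (simp add: M_exponent_def algebra_simps)
  moreover have "(\<Prod>i<n. h (x i)) \<ge> 0"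
    using x h_nonneg by (auto simp: space_PiM intro!: prod_nonneg)
  ultimately show ?thesis
    unfolding likelihood_eq by (intro mult_left_mono exp_mono mult_left_mono) simp_all
qed

lemma exp_A_slope_tendsto:
  assumes \<theta>: "\<theta> \<in> \<Theta>"
  shows "((\<lambda>s. (exp (A s - A \<theta>) - 1) / (\<eta> s - \<eta> \<theta>)) \<longlongrightarrow> \<theta>) (at \<theta> within \<Theta>)"
proof -
  have "((\<lambda>s. exp (A s - A \<theta>)) has_real_derivative 1 * A' \<theta>) (at \<theta> within \<Theta>)"
    using A_deriv[OF \<theta>] by (auto intro!: derivative_eq_intros)
  then have "((\<lambda>s. (exp (A s - A \<theta>) - 1) / (s - \<theta>)) \<longlongrightarrow> A' \<theta>) (at \<theta> within \<Theta>)"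
    by (simp add: has_field_derivative_iff)
  moreover have "((\<lambda>s. (\<eta> s - \<eta> \<theta>) / (s - \<theta>)) \<longlongrightarrow> \<eta>' \<theta>) (at \<theta> within \<Theta>)"
    using \<eta>_deriv[OF \<theta>] by (simp add: has_field_derivative_iff)
  ultimately have lim: "((\<lambda>s. ((exp (A s - A \<theta>) - 1) / (s - \<theta>)) / ((\<eta> s - \<eta> \<theta>) / (s - \<theta>)))
      \<longlongrightarrow> A' \<theta> / \<eta>' \<theta>) (at \<theta> within \<Theta>)"
    using \<eta>'_pos[OF \<theta>] by (intro tendsto_divide) auto
  have limit: "A' \<theta> / \<eta>' \<theta> = \<theta>"
    using A'_eq[OF \<theta>] \<eta>'_pos[OF \<theta>] by simp
  have eq: "eventually (\<lambda>s. ((exp (A s - A \<theta>) - 1) / (s - \<theta>)) / ((\<eta> s - \<eta> \<theta>) / (s - \<theta>))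
      = (exp (A s - A \<theta>) - 1) / (\<eta> s - \<eta> \<theta>)) (at \<theta> within \<Theta>)"
    by (auto simp: eventually_at_filter)
  show ?thesis
    using Lim_transform_eventually[OF lim eq] unfolding limit .
qed

lemma \<eta>_increment_seq:
  assumes \<theta>: "\<theta> \<in> \<Theta>" and s_in: "\<And>k. s k \<in> \<Theta>" and s_sgn: "\<And>k. sgn (s k - \<theta>) = \<sigma>"
    and s_step_sgn: "\<And>k. sgn (s (Suc k) - s k) = - \<sigma>"
    and s_lim: "filterlim s (at \<theta> within \<Theta>) sequentially" and \<sigma>: "\<bar>\<sigma>\<bar> = 1"
  shows "\<And>k. \<sigma> * (\<eta> (s k) - \<eta> \<theta>) > 0"
    and "decseq (\<lambda>k. \<sigma> * (\<eta> (s k) - \<eta> \<theta>))"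
    and "(\<lambda>k. \<sigma> * (\<eta> (s k) - \<eta> \<theta>)) \<longlonglongrightarrow> 0"
proof -
  have "\<sigma> * \<sigma> = 1"
    using \<sigma> abs_mult_self_eq[of \<sigma>] by simp
  show "\<sigma> * (\<eta> (s k) - \<eta> \<theta>) > 0" for k
  proof -
    have \<eta>_sgn: "sgn (\<eta> (s k) - \<eta> \<theta>) = \<sigma>"
      using strict_mono_on_sgn_diff[OF \<eta>_strict_mono s_in[of k] \<theta>] s_sgn[of k] by simp
    then have "\<eta> (s k) \<noteq> \<eta> \<theta>"
      using \<sigma> by auto
    moreover have "\<sigma> * (\<eta> (s k) - \<eta> \<theta>) = \<bar>\<eta> (s k) - \<eta> \<theta>\<bar>"
      unfolding \<eta>_sgn[symmetric] by (simp add: abs_sgn mult.commute)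
    ultimately show ?thesis
      by simp
  qed
  show "decseq (\<lambda>k. \<sigma> * (\<eta> (s k) - \<eta> \<theta>))"
  proof (rule decseq_SucI)
    fix k
    have "\<sigma> * (\<eta> (s (Suc k)) - \<eta> \<theta>) - \<sigma> * (\<eta> (s k) - \<eta> \<theta>) = - \<bar>\<eta> (s (Suc k)) - \<eta> (s k)\<bar>"
      using strict_mono_on_sgn_diff[OF \<eta>_strict_mono s_in s_in, of "Suc k" k] s_step_sgn[of k] \<open>\<sigma> * \<sigma> = 1\<close>
      by (simp add: abs_sgn algebra_simps)
    then show "\<sigma> * (\<eta> (s (Suc k)) - \<eta> \<theta>) \<le> \<sigma> * (\<eta> (s k) - \<eta> \<theta>)"
      by simp
  qed
  have "(\<lambda>k. \<eta> (s k)) \<longlonglongrightarrow> \<eta> \<theta>"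
    using filterlim_compose[OF DERIV_continuous[OF \<eta>_deriv[OF \<theta>], unfolded continuous_within] s_lim] .
  then show "(\<lambda>k. \<sigma> * (\<eta> (s k) - \<eta> \<theta>)) \<longlonglongrightarrow> 0"
    by (intro tendsto_mult_right_zero) (simp add: LIM_zero)
qed

lemma expectation_T_eq_param:
  assumes \<theta>: "\<theta> \<in> \<Theta>" and s0: "s0 \<in> \<Theta>" "s0 \<noteq> \<theta>"
  shows "integrable (P \<theta>) T \<and> (\<integral>x. T x \<partial>P \<theta>) = \<theta>"
proof -
  interpret prob_space "P \<theta>"
    using \<theta> by (rule prob_space_law)
  \<comment> \<open>Differentiate the identity \<open>E\<^sub>\<theta> exp ((\<eta> s - \<eta> \<theta>) T) = exp (A s - A \<theta>)\<close> at \<open>s = \<theta>\<close>,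
    along a sequence approaching \<open>\<theta>\<close> from the side \<open>\<sigma>\<close> of \<open>s0\<close>.\<close>
  define \<sigma> where "\<sigma> = sgn (s0 - \<theta>)"
  have \<sigma>: "\<bar>\<sigma>\<bar> = 1" "\<sigma> * \<sigma> = 1" "\<sigma> = 1 \<or> \<sigma> = -1"
    using s0(2) by (auto simp: \<sigma>_def sgn_if)
  obtain s where s: "\<And>k. s k \<in> \<Theta>" "\<And>k. sgn (s k - \<theta>) = \<sigma>" "\<And>k. sgn (s (Suc k) - s k) = - \<sigma>"
    "filterlim s (at \<theta> within \<Theta>) sequentially"
    using obtain_seq_approaching_from_side[OF interval \<theta> s0, folded \<sigma>_def] by blast
  define u where "u k = \<sigma> * (\<eta> (s k) - \<eta> \<theta>)" for k
  note u = \<eta>_increment_seq[OF \<theta> s \<sigma>(1), folded u_def]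
  have exp_u_T: "exp (u k * (\<sigma> * T x)) = exp ((\<eta> (s k) - \<eta> \<theta>) * T x)" for k x
  proof -
    have "u k * (\<sigma> * T x) = (\<sigma> * \<sigma>) * ((\<eta> (s k) - \<eta> \<theta>) * T x)"
      by (simp add: u_def ac_simps)
    then show ?thesis
      using \<sigma>(2) by simp
  qed
  have "(\<lambda>k. \<sigma> * ((exp (A (s k) - A \<theta>) - 1) / (\<eta> (s k) - \<eta> \<theta>))) \<longlonglongrightarrow> \<sigma> * \<theta>"
    by (intro tendsto_mult_left filterlim_compose[OF exp_A_slope_tendsto[OF \<theta>] s(4)])
  moreover have "\<sigma> * ((exp (A (s k) - A \<theta>) - 1) / (\<eta> (s k) - \<eta> \<theta>)) = (exp (A (s k) - A \<theta>) - 1) / u k" for k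
    using \<sigma>(3) u(1)[of k] by (auto simp: u_def field_simps)
  ultimately have "(\<lambda>k. (expectation (\<lambda>x. exp (u k * (\<sigma> * T x))) - 1) / u k) \<longlonglongrightarrow> \<sigma> * \<theta>"
    by (simp add: exp_u_T integral_exp_T[OF s(1)])
  then have "integrable (P \<theta>) (\<lambda>x. \<sigma> * T x)" "expectation (\<lambda>x. \<sigma> * T x) = \<sigma> * \<theta>"
    using expectation_eq_mgf_slope_limit[of "\<lambda>x. \<sigma> * T x" u, OF _ u] integrable_exp_T[OF s(1)]
    by (simp_all add: exp_u_T)
  then show ?thesis
    using \<sigma>(3) by auto
qed

end

locale nontrivial_expfam_mean_param = expfam_mean_param +
  assumes nontrivial: "\<exists>a\<in>\<Theta>. \<exists>b\<in>\<Theta>. a < b"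
begin

lemma expectation_T:
  assumes "\<theta> \<in> \<Theta>"
  shows "integrable (P \<theta>) T" and "(\<integral>x. T x \<partial>P \<theta>) = \<theta>"
proof -
  obtain s0 where "s0 \<in> \<Theta>" "s0 \<noteq> \<theta>"
    using nontrivial by (metis less_irrefl)
  then show "integrable (P \<theta>) T" "(\<integral>x. T x \<partial>P \<theta>) = \<theta>"
    using expectation_T_eq_param[OF assms] by blast+
qed

lemma theta_hat_unbiased:
  assumes \<theta>: "\<theta> \<in> \<Theta>"
  shows "integrable (Pn \<theta>) (theta_hat T n)" and "(\<integral>x. theta_hat T n x \<partial>Pn \<theta>) = \<theta>"
proof -
  have component: "(\<lambda>x. x i) \<in> measurable (Pn \<theta>) (P \<theta>)" "distr (Pn \<theta>) (P \<theta>) (\<lambda>x. x i) = P \<theta>"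
    if "i < n" for i
    unfolding Pn_eq_PiM using that prob_space_law[OF \<theta>]
    by (auto intro: distr_PiM_component)
  have T_int: "integrable (Pn \<theta>) (\<lambda>x. T (x i))" and T_mean: "(\<integral>x. T (x i) \<partial>Pn \<theta>) = \<theta>"
    if "i < n" for i
    using expectation_T[OF \<theta>] integrable_distr_eq[OF component(1)[OF that], of T]
      integral_distr[OF component(1)[OF that], of T]
    by (simp_all add: component(2)[OF that])
  have "theta_hat T n = (\<lambda>x. (\<Sum>i<n. T (x i)) / real n)"
    by (simp add: theta_hat_def[abs_def])
  moreover have "integrable (Pn \<theta>) (\<lambda>x. (\<Sum>i<n. T (x i)) / real n)"
    using T_int by (intro integrable_divide integrable_sum) auto
  moreover have "(\<integral>x. (\<Sum>i<n. T (x i)) / real n \<partial>Pn \<theta>) = \<theta>"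
    using T_int T_mean n_pos by (simp add: integral_sum)
  ultimately show "integrable (Pn \<theta>) (theta_hat T n)" "(\<integral>x. theta_hat T n x \<partial>Pn \<theta>) = \<theta>"
    by simp_all
qed

lemma M_fun_eq_nn_integral:
  assumes "z \<in> \<Theta>" "\<theta> \<in> \<Theta>"
  shows "ennreal (M_fun \<eta> A n z \<theta>)
    = (\<integral>\<^sup>+x. ennreal (exp (real n * (\<eta> z - \<eta> \<theta>) * (theta_hat T n x - z))) \<partial>Pn \<theta>)"
  using prob_space.emeasure_space_1[OF prob_space_Pn[OF assms(1)]]
  by (simp add: nn_integral_exp_theta_hat[OF assms(2,1)])

lemma M_fun_eq_INF:
  assumes z: "z \<in> \<Theta>" and \<theta>: "\<theta> \<in> \<Theta>"
  shows "ennreal (M_fun \<eta> A n z \<theta>)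
    = (INF t::real. \<integral>\<^sup>+x. ennreal (exp (real n * t * (theta_hat T n x - z))) \<partial>Pn \<theta>)"
proof -
  interpret Pz: prob_space "Pn z"
    using z by (rule prob_space_Pn)
  let ?F = "\<lambda>t. \<integral>\<^sup>+x. ennreal (exp (real n * t * (theta_hat T n x - z))) \<partial>Pn \<theta>"
  \<comment> \<open>Under \<open>Pn z\<close> the estimator has mean \<open>z\<close>, so every exponential moment of
    \<open>theta_hat T n - z\<close> is at least 1.\<close>
  have "1 \<le> (\<integral>\<^sup>+x. ennreal (exp (real n * w * (theta_hat T n x - z))) \<partial>Pn z)" for w
    using theta_hat_unbiased[OF z] by (intro Pz.nn_integral_exp_ge_one) (simp_all add: Pz.prob_space)
  then have "ennreal (M_fun \<eta> A n z \<theta>) \<le> ?F t" for t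
    unfolding nn_integral_exp_theta_hat[OF \<theta> z]
    using mult_left_mono[of 1 _ "ennreal (M_fun \<eta> A n z \<theta>)"] by simp
  then show ?thesis
    using INF_lower[of "\<eta> z - \<eta> \<theta>" UNIV ?F] M_fun_eq_nn_integral[OF z \<theta>]
    by (intro antisym INF_greatest) simp_all
qed

lemma T_not_AE_const:
  assumes z: "z \<in> \<Theta>"
  shows "\<not> (AE x in P z. T x = z)"
proof
  assume AE_z: "AE x in P z. T x = z"
  obtain s where s: "s \<in> \<Theta>" "s \<noteq> z"
    using nontrivial by (metis less_irrefl)
  interpret Ps: prob_space "P s"
    using s(1) by (rule prob_space_law)
  have "AE x in P s. T x = z"
    unfolding P_eq_density[of s z] using AE_z by (subst AE_density) (auto elim: eventually_mono)
  then have "(\<integral>x. T x \<partial>P s) = z"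
    by (simp add: integral_cong_AE[where g="\<lambda>_. z"] Ps.prob_space[unfolded space_P])
  then show False
    using expectation_T[OF s(1)] s(2) by simp
qed

lemma abs_moment_pos:
  assumes z: "z \<in> \<Theta>" and "0 < k" and int: "integrable (P z) (\<lambda>x. \<bar>T x - z\<bar> ^ k)"
  shows "0 < (\<integral>x. \<bar>T x - z\<bar> ^ k \<partial>P z)"
proof (rule ccontr)
  assume "\<not> ?thesis"
  moreover have "0 \<le> (\<integral>x. \<bar>T x - z\<bar> ^ k \<partial>P z)"
    by (rule integral_nonneg_AE) simp
  ultimately have "(\<integral>x. \<bar>T x - z\<bar> ^ k \<partial>P z) = 0"
    by simp
  then have "AE x in P z. T x = z"
    using integral_nonneg_eq_0_iff_AE[OF int] \<open>0 < k\<close> by (auto elim: eventually_mono)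
  then show False
    using T_not_AE_const[OF z] by simp
qed

lemma berry_esseen_theta_hat:
  assumes BE: "berry_esseen_const C" and z: "z \<in> \<Theta>"
    and int3: "integrable (P z) (\<lambda>x. \<bar>T x - z\<bar> ^ 3)" and \<sigma>: "\<bar>\<sigma>\<bar> = 1"
  shows "measure (Pn z) {x \<in> space (Pn z). \<sigma> * (theta_hat T n x - z) \<le> 0}
    \<le> 1/2 + C / sqrt (real n) *
      ((\<integral>x. \<bar>T x - z\<bar> ^ 3 \<partial>P z) / (\<integral>x. \<bar>T x - z\<bar> ^ 2 \<partial>P z) powr (3/2))"
proof -
  interpret Pz: prob_space "P z"
    using z by (rule prob_space_law)
  have abs_g: "\<bar>\<sigma> * (T x - z)\<bar> = \<bar>T x - z\<bar>" for x
    using \<sigma> by (simp add: abs_mult)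
  have square_g: "(\<sigma> * (T x - z))\<^sup>2 = \<bar>T x - z\<bar> ^ 2" for x
  proof -
    have "(\<sigma> * (T x - z))\<^sup>2 = \<bar>\<sigma> * (T x - z)\<bar>\<^sup>2"
      by simp
    then show ?thesis
      by (simp only: abs_g)
  qed
  have int2: "integrable (P z) (\<lambda>x. \<bar>T x - z\<bar> ^ 2)"
    by (rule Pz.integrable_abs_power_le[OF _ int3]) simp_all
  have "(\<integral>x. \<sigma> * (T x - z) \<partial>P z) = \<sigma> * ((\<integral>x. T x \<partial>P z) - z)"
    using expectation_T[OF z] by (simp add: Pz.prob_space[unfolded space_P])
  then have mean0: "(\<integral>x. \<sigma> * (T x - z) \<partial>P z) = 0"
    using expectation_T[OF z] by simp
  have var: "(\<integral>x. (\<sigma> * (T x - z))\<^sup>2 \<partial>P z) > 0"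
    unfolding square_g using abs_moment_pos[OF z _ int2] by simp
  have "(\<Sum>i<n. \<sigma> * (T (x i) - z)) = real n * (\<sigma> * (theta_hat T n x - z))" for x
    unfolding sum_distrib_left[symmetric] sum_subtractf sum_T_eq_theta_hat
    by (simp add: algebra_simps)
  then have "{x \<in> space (PiM {..<n} (\<lambda>_. P z)). (\<Sum>i<n. \<sigma> * (T (x i) - z)) \<le> 0}
      = {x \<in> space (Pn z). \<sigma> * (theta_hat T n x - z) \<le> 0}"
    using n_pos by (simp add: Pn_eq_PiM mult_le_0_iff)
  moreover have "integrable (P z) (\<lambda>x. \<bar>\<sigma> * (T x - z)\<bar> ^ 3)"
    using int3 by (simp only: abs_g)
  ultimately show ?thesis
    using berry_esseen_sum_nonpos[OF BE prob_space_law[OF z] _ _ mean0 var n_pos]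
    by (simp only: abs_g square_g Pn_eq_PiM) simp
qed

lemma berry_esseen_upper_tail:
  assumes "berry_esseen_const C" "z \<in> \<Theta>" "integrable (P z) (\<lambda>x. \<bar>T x - z\<bar> ^ 3)"
  shows "measure (Pn z) {x \<in> space (Pn z). theta_hat T n x \<ge> z}
    \<le> 1/2 + C / sqrt (real n) *
      ((\<integral>x. \<bar>T x - z\<bar> ^ 3 \<partial>P z) / (\<integral>x. \<bar>T x - z\<bar> ^ 2 \<partial>P z) powr (3/2))"
  using berry_esseen_theta_hat[OF assms, of "-1"] by simp

lemma berry_esseen_lower_tail:
  assumes "berry_esseen_const C" "z \<in> \<Theta>" "integrable (P z) (\<lambda>x. \<bar>T x - z\<bar> ^ 3)"
  shows "measure (Pn z) {x \<in> space (Pn z). theta_hat T n x \<le> z}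
    \<le> 1/2 + C / sqrt (real n) *
      ((\<integral>x. \<bar>T x - z\<bar> ^ 3 \<partial>P z) / (\<integral>x. \<bar>T x - z\<bar> ^ 2 \<partial>P z) powr (3/2))"
  using berry_esseen_theta_hat[OF assms, of 1] by simp

end

theorem theorem3:
  fixes \<mu> :: "'a measure"
    and h T :: "'a \<Rightarrow> real"
    and \<eta> A \<eta>' A' :: "real \<Rightarrow> real"
    and \<Theta> :: "real set"
    and n :: nat
    and C :: real
  assumes interval: "is_interval \<Theta>"
    and h_meas: "h \<in> borel_measurable \<mu>"
    and T_meas: "T \<in> borel_measurable \<mu>"
    and h_nonneg: "\<And>x. x \<in> space \<mu> \<Longrightarrow> h x \<ge> 0"
    and is_density: "\<And>\<theta>. \<theta> \<in> \<Theta> \<Longrightarrow> prob_space (expfam_law \<mu> h T \<eta> A \<theta>)"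
    and \<eta>_deriv: "\<And>\<theta>. \<theta> \<in> \<Theta> \<Longrightarrow> (\<eta> has_real_derivative \<eta>' \<theta>) (at \<theta> within \<Theta>)"
    and A_deriv: "\<And>\<theta>. \<theta> \<in> \<Theta> \<Longrightarrow> (A has_real_derivative A' \<theta>) (at \<theta> within \<Theta>)"
    and \<eta>'_pos: "\<And>\<theta>. \<theta> \<in> \<Theta> \<Longrightarrow> \<eta>' \<theta> > 0"
    and n_pos: "n \<ge> 1"
    and BE: "berry_esseen_const C"
  shows
   "(\<forall>z\<in>\<Theta>. \<forall>\<theta>\<in>\<Theta>. z \<ge> \<theta> \<longrightarrow>
       measure (sample_law \<mu> h T \<eta> A n \<theta>)
         {x \<in> space (sample_law \<mu> h T \<eta> A n \<theta>). theta_hat T n x \<ge> z}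
       \<le> M_fun \<eta> A n z \<theta> *
         measure (sample_law \<mu> h T \<eta> A n z)
           {x \<in> space (sample_law \<mu> h T \<eta> A n z). theta_hat T n x \<ge> z})
  \<and> (\<forall>z\<in>\<Theta>. \<forall>\<theta>\<in>\<Theta>. z \<le> \<theta> \<longrightarrow>
       measure (sample_law \<mu> h T \<eta> A n \<theta>)
         {x \<in> space (sample_law \<mu> h T \<eta> A n \<theta>). theta_hat T n x \<le> z}
       \<le> M_fun \<eta> A n z \<theta> *
         measure (sample_law \<mu> h T \<eta> A n z)
           {x \<in> space (sample_law \<mu> h T \<eta> A n z). theta_hat T n x \<le> z})
  \<and> (((\<forall>\<theta>\<in>\<Theta>. A' \<theta> = \<theta> * \<eta>' \<theta>) \<and> (\<exists>a\<in>\<Theta>. \<exists>b\<in>\<Theta>. a < b)) \<longrightarrow>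
      \<comment> \<open>(i) maximum likelihood and unbiased\<close>
      (\<forall>x\<in>space (PiM {..<n} (\<lambda>_. \<mu>)). theta_hat T n x \<in> \<Theta> \<longrightarrow>
          (\<forall>\<theta>\<in>\<Theta>. likelihood h T \<eta> A n \<theta> x \<le> likelihood h T \<eta> A n (theta_hat T n x) x))
    \<and> (\<forall>\<theta>\<in>\<Theta>. integrable (sample_law \<mu> h T \<eta> A n \<theta>) (theta_hat T n)
          \<and> (\<integral>x. theta_hat T n x \<partial>sample_law \<mu> h T \<eta> A n \<theta>) = \<theta>)
      \<comment> \<open>(ii) M is the Chernoff bound, infimum attained at eta z - eta theta\<close>
    \<and> (\<forall>z\<in>\<Theta>. \<forall>\<theta>\<in>\<Theta>.
          ennreal (M_fun \<eta> A n z \<theta>)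
            = (INF t::real. \<integral>\<^sup>+ x. ennreal (exp (real n * t * (theta_hat T n x - z)))
                               \<partial>sample_law \<mu> h T \<eta> A n \<theta>)
        \<and> ennreal (M_fun \<eta> A n z \<theta>)
            = (\<integral>\<^sup>+ x. ennreal (exp (real n * (\<eta> z - \<eta> \<theta>) * (theta_hat T n x - z)))
                   \<partial>sample_law \<mu> h T \<eta> A n \<theta>))
      \<comment> \<open>(iii) monotonicity in theta\<close>
    \<and> (\<forall>z\<in>\<Theta>. mono_on {\<theta>\<in>\<Theta>. \<theta> \<le> z} (\<lambda>\<theta>. M_fun \<eta> A n z \<theta>)
              \<and> antimono_on {\<theta>\<in>\<Theta>. \<theta> \<ge> z} (\<lambda>\<theta>. M_fun \<eta> A n z \<theta>))
      \<comment> \<open>(iv) monotonicity in z\<close>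
    \<and> (\<forall>\<theta>\<in>\<Theta>. mono_on {z\<in>\<Theta>. z \<le> \<theta>} (\<lambda>z. M_fun \<eta> A n z \<theta>)
              \<and> antimono_on {z\<in>\<Theta>. z \<ge> \<theta>} (\<lambda>z. M_fun \<eta> A n z \<theta>))
      \<comment> \<open>(v) Berry--Esseen bounds\<close>
    \<and> (\<forall>z\<in>\<Theta>. integrable (expfam_law \<mu> h T \<eta> A z) (\<lambda>x. \<bar>T x - z\<bar> ^ 3) \<longrightarrow>
          measure (sample_law \<mu> h T \<eta> A n z)
            {x \<in> space (sample_law \<mu> h T \<eta> A n z). theta_hat T n x \<ge> z}
          \<le> 1/2 + C / sqrt (real n) *
               ((\<integral>x. \<bar>T x - z\<bar> ^ 3 \<partial>expfam_law \<mu> h T \<eta> A z)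
                / (\<integral>x. \<bar>T x - z\<bar> ^ 2 \<partial>expfam_law \<mu> h T \<eta> A z) powr (3/2))
        \<and> measure (sample_law \<mu> h T \<eta> A n z)
            {x \<in> space (sample_law \<mu> h T \<eta> A n z). theta_hat T n x \<le> z}
          \<le> 1/2 + C / sqrt (real n) *
               ((\<integral>x. \<bar>T x - z\<bar> ^ 3 \<partial>expfam_law \<mu> h T \<eta> A z)
                / (\<integral>x. \<bar>T x - z\<bar> ^ 2 \<partial>expfam_law \<mu> h T \<eta> A z) powr (3/2)))
    \<and> (\<forall>z\<in>\<Theta>. integrable (expfam_law \<mu> h T \<eta> A z) (\<lambda>x. \<bar>T x - z\<bar> ^ 4) \<longrightarrow>
          1/2 + C / sqrt (real n) *
               ((\<integral>x. \<bar>T x - z\<bar> ^ 3 \<partial>expfam_law \<mu> h T \<eta> A z)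
                / (\<integral>x. \<bar>T x - z\<bar> ^ 2 \<partial>expfam_law \<mu> h T \<eta> A z) powr (3/2))
          \<le> 1/2 + C / sqrt (real n) *
               ((\<integral>x. \<bar>T x - z\<bar> ^ 4 \<partial>expfam_law \<mu> h T \<eta> A z) powr (3/4)
                / (\<integral>x. \<bar>T x - z\<bar> ^ 2 \<partial>expfam_law \<mu> h T \<eta> A z) powr (3/2))))"
proof -
  interpret expfam \<mu> h T \<eta> A \<eta>' A' \<Theta> n
    using interval h_meas T_meas h_nonneg is_density \<eta>_deriv A_deriv \<eta>'_pos n_pos
    by (rule expfam.intro)
  show ?thesis
  proof (cases "(\<forall>\<theta>\<in>\<Theta>. A' \<theta> = \<theta> * \<eta>' \<theta>) \<and> (\<exists>a\<in>\<Theta>. \<exists>b\<in>\<Theta>. a < b)")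
    case True
    then interpret nontrivial_expfam_mean_param \<mu> h T \<eta> A \<eta>' A' \<Theta> n
      by unfold_locales auto
    show ?thesis
      by (intro conjI impI ballI)
        (assumption | rule upper_tail_le lower_tail_le theta_hat_maximizes_likelihood theta_hat_unbiased
          M_fun_eq_INF M_fun_eq_nn_integral M_fun_mono_param M_fun_mono_point
          berry_esseen_upper_tail[OF BE] berry_esseen_lower_tail[OF BE]
          berry_esseen_bound_le_fourth_moment[OF BE])+
  next
    case False
    then show ?thesis
      using upper_tail_le lower_tail_le by auto
  qed
qed

end
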